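(* Let $m\ge1$. Every constrained Young tableau of size $2\times m$ is realizable: for every such tableau $T$ there exist $\mathbf{a}=(a_1,a_2)$ and $\mathbf{b}=(b_1,\dots,b_m)$ with $0=a_1\le a_2$ and $0=b_1\le b_2\le\dots\le b_m$ such that for all cells $(i,j),(i',j')\in[2]\times[m]$ one has $T(i,j)<T(i',j')\iff a_i+b_j<a_{i'}+b_{j'}$ and $T(i,j)=T(i',j')\iff a_i+b_j=a_{i'}+b_{j'}$.
   Context: A constrained Young tableau of size $p\times m$ is a map $T:[p]\times[m]\to\{1,\dots,K\}$ onto $\{1,\dots,K\}$ (for some $K$) that is weakly increasing along each row and each column, and satisfies: (i) if $T(i,j)=T(i,j+1)$ for some $i\in[p]$, then $T(i',j)=T(i',j+1)$ for all $i'\in[p]$; (ii) if $T(i,j)=T(i+1,j)$ for some $j\in[m]$, then $T(i,j')=T(i+1,j')$ for all $j'\in[m]$. It is realizable if it is the tableau of relative orders of the values $a_i+b_j$ for some vectors $\mathbf{a},\mathbf{b}$ with weakly increasing entries, as in the claim. (These values are the values of the linear functional $(\mathbf{a},\mathbf{b})$ on the vertices $(\mathbf{e}_i,\mathbf{e}_j)$ of $\Delta_{p-1}\times\Delta_{m-1}$.) *)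

theory Defs
  imports Complex_Main
begin

definition constrained_young_tableau :: "nat \<Rightarrow> nat \<Rightarrow> (nat \<Rightarrow> nat \<Rightarrow> nat) \<Rightarrow> bool" where
  "constrained_young_tableau p m T \<longleftrightarrow>
     (\<exists>K::nat. (\<lambda>(i,j). T i j) ` ({1..p} \<times> {1..m}) = {1..K}) \<and>
     (\<forall>i\<in>{1..p}. \<forall>j\<in>{1..m}. \<forall>j'\<in>{1..m}. j \<le> j' \<longrightarrow> T i j \<le> T i j') \<and>
     (\<forall>j\<in>{1..m}. \<forall>i\<in>{1..p}. \<forall>i'\<in>{1..p}. i \<le> i' \<longrightarrow> T i j \<le> T i' j) \<and>
     (\<forall>i\<in>{1..p}. \<forall>j. 1 \<le> j \<and> j < m \<longrightarrow> T i j = T i (j+1) \<longrightarrow>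
         (\<forall>i'\<in>{1..p}. T i' j = T i' (j+1))) \<and>
     (\<forall>j\<in>{1..m}. \<forall>i. 1 \<le> i \<and> i < p \<longrightarrow> T i j = T (i+1) j \<longrightarrow>
         (\<forall>j'\<in>{1..m}. T i j' = T (i+1) j'))"

end

theory Submission
  imports Defs
begin

text \<open>If the two rows of the tableau agree in one column, condition (ii) forces them to agree
everywhere, and \<open>a = 0\<close>, \<open>b\<^sub>j = T(1,j)\<close> realizes it. Otherwise \<open>T(1,j) < T(2,j)\<close> in every
column; we fix \<open>a\<^sub>2 = 1\<close> and choose \<open>b\<^sub>1, b\<^sub>2, \<dots>\<close> column by column so that the entries
\<open>T(i,j)\<close> and the reals \<open>a\<^sub>i + b\<^sub>j\<close> stay in the same relative order. The value \<open>b\<^sub>j\<close> is found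
by interpolating between the values already placed; by condition (i) the new column either
repeats the previous one or lies strictly above all earlier columns in both rows, so the second
entry \<open>b\<^sub>j + 1\<close> is then automatically in the right position.\<close>

definition order_consistent :: "('a::linorder \<times> 'b::linorder) set \<Rightarrow> bool" where
  "order_consistent P \<longleftrightarrow> (\<forall>p\<in>P. \<forall>q\<in>P. fst p < fst q \<longleftrightarrow> snd p < snd q)"

lemma order_consistent_eq:
  assumes "order_consistent P" "p \<in> P" "q \<in> P"
  shows "fst p = fst q \<longleftrightarrow> snd p = snd q"
  using assms unfolding order_consistent_def by (metis not_less_iff_gr_or_eq)

lemma order_consistent_subset:
  "order_consistent P \<Longrightarrow> Q \<subseteq> P \<Longrightarrow> order_consistent Q"
  unfolding order_consistent_def by blast

lemma order_consistent_insert: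
  "order_consistent (insert p P) \<longleftrightarrow> order_consistent P \<and>
     (\<forall>q\<in>P. (fst q < fst p \<longleftrightarrow> snd q < snd p) \<and> (fst p < fst q \<longleftrightarrow> snd p < snd q))"
  unfolding order_consistent_def by auto

lemma exists_between_finite_sets:
  fixes L H :: "'a::{dense_linorder,no_top,no_bot} set"
  assumes "finite L" "finite H" "\<And>l h. l \<in> L \<Longrightarrow> h \<in> H \<Longrightarrow> l < h"
  shows "\<exists>t. (\<forall>l\<in>L. l < t) \<and> (\<forall>h\<in>H. t < h)"
proof (cases "L = {}")
  case True
  obtain t where "\<forall>h\<in>H. t < h"
  proof (cases "H = {}")
    case False
    obtain t where "t < Min H" using lt_ex by blast
    with assms(2) False show ?thesis using that by (meson Min_le order.strict_trans2)
  qed (use that in auto)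
  with True show ?thesis by blast
next
  case False
  show ?thesis
  proof (cases "H = {}")
    case True
    obtain t where "Max L < t" using gt_ex by blast
    with assms(1) False True show ?thesis by (meson Max_ge empty_iff order.strict_trans1)
  next
    case HF: False
    have "Max L < Min H" using assms False HF by simp
    then obtain t where "Max L < t" "t < Min H" using dense by blast
    with assms(1,2) show ?thesis by (meson Max_ge Min_le order.strict_trans1 order.strict_trans2)
  qed
qed

lemma order_consistent_extend:
  fixes P :: "('a::linorder \<times> 'b::{dense_linorder,no_top,no_bot}) set"
  assumes "finite P" "order_consistent P"
  shows "\<exists>t. order_consistent (insert (v, t) P)"
proof (cases "\<exists>q\<in>P. fst q = v")
  case True
  then obtain q where "q \<in> P" "fst q = v" by blast
  then have "insert (v, snd q) P = P" by (metis insert_absorb prod.collapse)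
  with assms(2) show ?thesis by metis
next
  case False
  define L where "L = snd ` {p\<in>P. fst p < v}"
  define H where "H = snd ` {p\<in>P. v < fst p}"
  have "\<And>l h. l \<in> L \<Longrightarrow> h \<in> H \<Longrightarrow> l < h"
    using assms(2) unfolding L_def H_def order_consistent_def by force
  then obtain t where "\<forall>l\<in>L. l < t" "\<forall>h\<in>H. t < h"
    using exists_between_finite_sets[of L H] assms(1) unfolding L_def H_def by auto
  then have "\<forall>q\<in>P. (fst q < v \<longleftrightarrow> snd q < t) \<and> (v < fst q \<longleftrightarrow> t < snd q)"
    using False unfolding L_def H_def by (metis (mono_tags) image_eqI mem_Collect_eq not_less_iff_gr_or_eq)
  with assms(2) show ?thesis by (auto simp: order_consistent_insert)
qed

lemma order_consistent_insert_above:
  assumes "order_consistent P" "\<And>q. q \<in> P \<Longrightarrow> fst q < fst p \<and> snd q < snd p"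
  shows "order_consistent (insert p P)"
  using assms by (auto simp: order_consistent_insert dest: less_asym)

definition two_row_points :: "(nat \<Rightarrow> 'a) \<Rightarrow> (nat \<Rightarrow> 'a) \<Rightarrow> (nat \<Rightarrow> 'b::linordered_field) \<Rightarrow> nat \<Rightarrow> ('a \<times> 'b) set" where
  "two_row_points x y b n = (\<Union>j\<in>{1..n}. {(x j, b j), (y j, b j + 1)})"

lemma two_row_points_Suc:
  "two_row_points x y (b(Suc n := t)) (Suc n) =
     insert (y (Suc n), t + 1) (insert (x (Suc n), t) (two_row_points x y b n))"
proof -
  have "{1..Suc n} = insert (Suc n) {1..n}" by auto
  then show ?thesis by (auto simp: two_row_points_def)
qed

lemma two_row_points_order_consistent_Suc:
  fixes x y :: "nat \<Rightarrow> 'a::linorder" and b :: "nat \<Rightarrow> 'b::linordered_field"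
  assumes b: "order_consistent (two_row_points x y b n)"
    and mono: "mono_on {1..Suc n} x" "mono_on {1..Suc n} y"
    and below_diag: "\<And>j. j \<in> {1..Suc n} \<Longrightarrow> x j < y j"
    and step: "1 \<le> n \<Longrightarrow> x n = x (Suc n) \<longleftrightarrow> y n = y (Suc n)"
  shows "\<exists>t. order_consistent (two_row_points x y (b(Suc n := t)) (Suc n))"
proof -
  let ?P = "two_row_points x y b n"
  have "finite ?P" by (simp add: two_row_points_def)
  with b obtain t where t: "order_consistent (insert (x (Suc n), t) ?P)"
    using order_consistent_extend by blast
  have "order_consistent (insert (y (Suc n), t + 1) (insert (x (Suc n), t) ?P))"
  proof (cases "1 \<le> n \<and> x (Suc n) = x n")
    case True
    then have "(x n, b n) \<in> ?P" "(y n, b n + 1) \<in> ?P" by (auto simp: two_row_points_def)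
    then have "t = b n"
      using order_consistent_eq[OF t, of "(x (Suc n), t)" "(x n, b n)"] True by simp
    moreover have "y (Suc n) = y n" using step True by simp
    ultimately have "(y (Suc n), t + 1) \<in> insert (x (Suc n), t) ?P"
      using \<open>(y n, b n + 1) \<in> ?P\<close> by simp
    with t show ?thesis by (simp add: insert_absorb)
  next
    case False
    have below: "x j < y (Suc n) \<and> y j < y (Suc n) \<and> b j < t" if "j \<in> {1..n}" for j
    proof -
      have "x n \<noteq> x (Suc n)" using False that by auto
      then have "y n \<noteq> y (Suc n)" using step that by auto
      have "x j \<le> x n" "x n \<le> x (Suc n)" "y j \<le> y n" "y n \<le> y (Suc n)"
        using mono that by (auto elim!: mono_onD)
      then have "x j < x (Suc n)" "y j < y (Suc n)"
        using \<open>x n \<noteq> x (Suc n)\<close> \<open>y n \<noteq> y (Suc n)\<close> by auto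
      moreover have "(x j, b j) \<in> ?P" using that by (auto simp: two_row_points_def)
      ultimately show ?thesis
        using t below_diag[of j] that by (auto simp: order_consistent_insert)
    qed
    have below_shifted: "b j < t + 1" if "j \<in> {1..n}" for j
      using below[OF that] less_add_one order.strict_trans by blast
    show ?thesis
    proof (rule order_consistent_insert_above[OF t])
      fix q assume "q \<in> insert (x (Suc n), t) ?P"
      then show "fst q < fst (y (Suc n), t + 1) \<and> snd q < snd (y (Suc n), t + 1)"
        using below below_shifted below_diag[of "Suc n"] by (auto simp: two_row_points_def)
    qed
  qed
  then show ?thesis by (metis two_row_points_Suc)
qed

lemma two_row_order_consistent_exists:
  fixes x y :: "nat \<Rightarrow> 'a::linorder"
  assumes "mono_on {1..n} x" "mono_on {1..n} y"
    and "\<And>j. j \<in> {1..n} \<Longrightarrow> x j < y j"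
    and "\<And>j. 1 \<le> j \<Longrightarrow> j < n \<Longrightarrow> x j = x (Suc j) \<longleftrightarrow> y j = y (Suc j)"
  shows "\<exists>b::nat \<Rightarrow> 'b::linordered_field. order_consistent (two_row_points x y b n)"
  using assms
proof (induction n)
  case 0
  show ?case by (simp add: two_row_points_def order_consistent_def)
next
  case (Suc n)
  have "mono_on {1..n} x" "mono_on {1..n} y"
    using Suc.prems(1,2) by (auto elim: mono_on_subset)
  with Suc obtain b :: "nat \<Rightarrow> 'b" where "order_consistent (two_row_points x y b n)"
    by force
  then show ?case
    using two_row_points_order_consistent_Suc[of x y b n] Suc.prems by blast
qed

lemma constrained_young_tableau_row_mono:
  "constrained_young_tableau p m T \<Longrightarrow> i \<in> {1..p} \<Longrightarrow> mono_on {1..m} (T i)"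
  unfolding constrained_young_tableau_def by (auto intro: mono_onI)

lemma constrained_young_tableau_col_mono:
  "constrained_young_tableau p m T \<Longrightarrow> j \<in> {1..m} \<Longrightarrow> i \<in> {1..p} \<Longrightarrow> i' \<in> {1..p} \<Longrightarrow>
     i \<le> i' \<Longrightarrow> T i j \<le> T i' j"
  unfolding constrained_young_tableau_def by blast

lemma constrained_young_tableau_row_step:
  "constrained_young_tableau p m T \<Longrightarrow> i \<in> {1..p} \<Longrightarrow> i' \<in> {1..p} \<Longrightarrow> 1 \<le> j \<Longrightarrow> j < m \<Longrightarrow>
     T i j = T i (Suc j) \<Longrightarrow> T i' j = T i' (Suc j)"
  unfolding constrained_young_tableau_def by (metis Suc_eq_plus1)

lemma constrained_young_tableau_col_step:
  "constrained_young_tableau p m T \<Longrightarrow> j \<in> {1..m} \<Longrightarrow> j' \<in> {1..m} \<Longrightarrow> 1 \<le> i \<Longrightarrow> i < p \<Longrightarrow>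
     T i j = T (i + 1) j \<Longrightarrow> T i j' = T (i + 1) j'"
  unfolding constrained_young_tableau_def by blast

definition tableau_points :: "nat \<Rightarrow> nat \<Rightarrow> (nat \<Rightarrow> nat \<Rightarrow> nat) \<Rightarrow> (nat \<Rightarrow> real) \<Rightarrow> (nat \<Rightarrow> real) \<Rightarrow> (nat \<times> real) set" where
  "tableau_points p m T a b = (\<lambda>(i, j). (T i j, a i + b j)) ` ({1..p} \<times> {1..m})"

lemma two_row_tableau_with_equal_rows_embedding:
  assumes "constrained_young_tableau 2 m T" "j \<in> {1..m}" "T 1 j = T 2 j"
  shows "order_consistent (tableau_points 2 m T (\<lambda>_. 0) (\<lambda>j. real (T 1 j)))"
proof (rule order_consistent_subset)
  show "order_consistent (range (\<lambda>k. (k, real k)))"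
    by (auto simp: order_consistent_def)
  show "tableau_points 2 m T (\<lambda>_. 0) (\<lambda>j. real (T 1 j)) \<subseteq> range (\<lambda>k. (k, real k))"
  proof
    fix p assume "p \<in> tableau_points 2 m T (\<lambda>_. 0) (\<lambda>j. real (T 1 j))"
    then obtain i j' where i: "i \<in> {1..2}" and j': "j' \<in> {1..m}" and p: "p = (T i j', real (T 1 j'))"
      by (auto simp: tableau_points_def)
    have "T 1 j' = T 2 j'"
      using constrained_young_tableau_col_step[OF assms(1,2) j', of 1, unfolded one_add_one] assms(3)
      by simp
    moreover have "i = 1 \<or> i = 2" using i by auto
    ultimately show "p \<in> range (\<lambda>k. (k, real k))" using p by auto
  qed
qed

lemma two_row_tableau_with_distinct_rows_embedding:
  assumes "constrained_young_tableau 2 m T" "\<And>j. j \<in> {1..m} \<Longrightarrow> T 1 j \<noteq> T 2 j"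
  obtains b where "order_consistent (tableau_points 2 m T (\<lambda>i. if i = 2 then 1 else 0) b)"
proof -
  have "T 1 j < T 2 j" if "j \<in> {1..m}" for j
    using constrained_young_tableau_col_mono[OF assms(1) that, of 1 2] assms(2)[OF that] by simp
  moreover have "T 1 j = T 1 (Suc j) \<longleftrightarrow> T 2 j = T 2 (Suc j)" if "1 \<le> j" "j < m" for j
    using constrained_young_tableau_row_step[of 2 m T 1 2 j]
      constrained_young_tableau_row_step[of 2 m T 2 1 j] assms(1) that by auto
  ultimately have "\<exists>b :: nat \<Rightarrow> real. order_consistent (two_row_points (T 1) (T 2) b m)"
    using constrained_young_tableau_row_mono[OF assms(1)]
    by (intro two_row_order_consistent_exists) auto
  then obtain b :: "nat \<Rightarrow> real" where "order_consistent (two_row_points (T 1) (T 2) b m)" ..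
  moreover have "tableau_points 2 m T (\<lambda>i. if i = 2 then 1 else 0) b \<subseteq> two_row_points (T 1) (T 2) b m"
  proof
    fix p assume "p \<in> tableau_points 2 m T (\<lambda>i. if i = 2 then 1 else 0) b"
    then obtain i j where "i \<in> {1..2}" "j \<in> {1..m}" "p = (T i j, (if i = 2 then 1 else 0) + b j)"
      by (auto simp: tableau_points_def)
    moreover have "i = 1 \<or> i = 2" using \<open>i \<in> {1..2}\<close> by auto
    ultimately show "p \<in> two_row_points (T 1) (T 2) b m"
      unfolding two_row_points_def by (auto simp: add.commute)
  qed
  ultimately show ?thesis using that order_consistent_subset by blast
qed

lemma two_row_realization_of_order_consistent:
  fixes a b :: "nat \<Rightarrow> real"
  assumes "mono_on {1..m} (T 1)" "a 1 = 0" "0 \<le> a 2"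
    and "order_consistent (tableau_points 2 m T a b)"
  shows "\<exists>(a::nat \<Rightarrow> real) (b::nat \<Rightarrow> real).
           a 1 = 0 \<and> a 1 \<le> a 2 \<and> b 1 = 0 \<and>
           (\<forall>j\<in>{1..m}. \<forall>j'\<in>{1..m}. j \<le> j' \<longrightarrow> b j \<le> b j') \<and>
           (\<forall>i\<in>{1..2}. \<forall>j\<in>{1..m}. \<forall>i'\<in>{1..2}. \<forall>j'\<in>{1..m}.
              (T i j < T i' j' \<longleftrightarrow> a i + b j < a i' + b j') \<and>
              (T i j = T i' j' \<longleftrightarrow> a i + b j = a i' + b j'))"
proof (intro exI conjI)
  let ?P = "tableau_points 2 m T a b"
  have cell: "(T i j, a i + b j) \<in> ?P" if "i \<in> {1..2}" "j \<in> {1..m}" for i j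
    using that unfolding tableau_points_def by (intro image_eqI[where x = "(i, j)"]) auto
  show cells: "\<forall>i\<in>{1..2}. \<forall>j\<in>{1..m}. \<forall>i'\<in>{1..2}. \<forall>j'\<in>{1..m}.
      (T i j < T i' j' \<longleftrightarrow> a i + (b j - b 1) < a i' + (b j' - b 1)) \<and>
      (T i j = T i' j' \<longleftrightarrow> a i + (b j - b 1) = a i' + (b j' - b 1))"
  proof (intro ballI)
    fix i j i' j' :: nat assume "i \<in> {1..2}" "j \<in> {1..m}" "i' \<in> {1..2}" "j' \<in> {1..m}"
    then have p: "(T i j, a i + b j) \<in> ?P" and q: "(T i' j', a i' + b j') \<in> ?P"
      by (simp_all add: cell)
    have "T i j < T i' j' \<longleftrightarrow> a i + b j < a i' + b j'"
      using assms(4) p q unfolding order_consistent_def by fastforce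
    moreover have "T i j = T i' j' \<longleftrightarrow> a i + b j = a i' + b j'"
      using order_consistent_eq[OF assms(4) p q] by simp
    ultimately
    show "(T i j < T i' j' \<longleftrightarrow> a i + (b j - b 1) < a i' + (b j' - b 1)) \<and>
      (T i j = T i' j' \<longleftrightarrow> a i + (b j - b 1) = a i' + (b j' - b 1))" by simp
  qed
  show "\<forall>j\<in>{1..m}. \<forall>j'\<in>{1..m}. j \<le> j' \<longrightarrow> b j - b 1 \<le> b j' - b 1"
  proof (intro ballI impI)
    fix j j' assume "j \<in> {1..m}" "j' \<in> {1..m}" "j \<le> j'"
    with assms(1) have "\<not> T 1 j' < T 1 j" by (simp add: mono_onD leD)
    moreover have "T 1 j' < T 1 j \<longleftrightarrow> a 1 + (b j' - b 1) < a 1 + (b j - b 1)"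
      using cells \<open>j \<in> {1..m}\<close> \<open>j' \<in> {1..m}\<close> by simp
    ultimately show "b j - b 1 \<le> b j' - b 1" by simp
  qed
qed (use assms(2,3) in auto)

theorem proposition2p6:
  fixes m :: nat and T :: "nat \<Rightarrow> nat \<Rightarrow> nat"
  assumes "m \<ge> 1"
    and "constrained_young_tableau 2 m T"
  shows "\<exists>(a::nat \<Rightarrow> real) (b::nat \<Rightarrow> real).
           a 1 = 0 \<and> a 1 \<le> a 2 \<and> b 1 = 0 \<and>
           (\<forall>j\<in>{1..m}. \<forall>j'\<in>{1..m}. j \<le> j' \<longrightarrow> b j \<le> b j') \<and>
           (\<forall>i\<in>{1..2}. \<forall>j\<in>{1..m}. \<forall>i'\<in>{1..2}. \<forall>j'\<in>{1..m}.
              (T i j < T i' j' \<longleftrightarrow> a i + b j < a i' + b j') \<and>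
              (T i j = T i' j' \<longleftrightarrow> a i + b j = a i' + b j'))"
proof -
  obtain a b :: "nat \<Rightarrow> real"
    where "a 1 = 0" "0 \<le> a 2" "order_consistent (tableau_points 2 m T a b)"
  proof (cases "\<exists>j\<in>{1..m}. T 1 j = T 2 j")
    case True
    then obtain j where "j \<in> {1..m}" "T 1 j = T 2 j" by blast
    then show ?thesis
      using that[of "\<lambda>_. 0" "\<lambda>j. real (T 1 j)"] two_row_tableau_with_equal_rows_embedding[OF assms(2)]
      by simp
  next
    case False
    then obtain b where "order_consistent (tableau_points 2 m T (\<lambda>i. if i = 2 then 1 else 0) b)"
      using two_row_tableau_with_distinct_rows_embedding[OF assms(2)] by blast
    then show ?thesis using that[of "\<lambda>i. if i = 2 then 1 else 0" b] by simp
  qed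
  moreover have "mono_on {1..m} (T 1)"
    using constrained_young_tableau_row_mono[OF assms(2)] by simp
  ultimately show ?thesis using two_row_realization_of_order_consistent by blast
qed

end
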